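(* If $a\in\mathcal{A}(D_n)$ satisfies $f'_{r,P,Q}(a)=0$ for all $P,Q\in\mathbb{N}_0^n$, then $a=0$.
   Context: Fix $n\ge1$; $|P|=\sum P_i$. $D_n=Z/U(1)$, $Z=\{r\in\mathbb{C}^{1+n}:-|r^0|^2+\sum_{i\ge1}|r^i|^2=-1\}$. $\hat D_n=\hat Z/\mathbb{C}^*$, $\hat Z=\{(p,q)\in\mathbb{C}^{1+n}\times\mathbb{C}^{1+n}:-p^0q^0+\sum_{i\ge1}p^iq^i=-1\}$, $z\cdot(p,q)=(zp,q/z)$; $\Delta_D([r])=[r,\bar r]$. $\mathcal{A}(D_n)=\{\hat a\circ\Delta_D:\hat a\in\mathcal{O}(\hat D_n)\}$, $\hat a$ uniquely determined by $a$. $P$-chart: on $\{[p,q]\in\hat D_n:q^0\neq0\}$, $\hat\phi^P([p,q])=(p^1q^0,\dots,p^nq^0,q^1/q^0,\dots,q^n/q^0)$; $Q$-chart: on $\{[p,q]:p^0\neq0\}$, $\hat\phi^Q([p,q])=(p^1/p^0,\dots,p^n/p^0,p^0q^1,\dots,p^0q^n)$; both are biholomorphic onto $\mathbb{C}^n\times\mathbb{C}^n$. For $P,Q\in\mathbb{N}_0^n$, $f'_{r,P,Q}(a)$ is the coefficient of $x^Py^Q$ in the Taylor expansion at $0$ of the entire function $\hat a\circ(\hat\phi^P)^{-1}(x,y)$ if $|P|\ge|Q|$, and of $\hat a\circ(\hat\phi^Q)^{-1}(x,y)$ if $|P|<|Q|$. *)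

theory Defs
  imports "HOL-Analysis.Analysis"
begin

text \<open>Points of C^(1+n) are pairs (r0, r) with r0 the 0-th coordinate and
  r :: complex^'n the coordinates 1..n (n = CARD('n) >= 1).
  Points of C^(1+n) x C^(1+n) are pairs (p, q).\<close>

type_synonym 'n cpt = "complex \<times> (complex^'n)"
type_synonym 'n hpt = "'n cpt \<times> 'n cpt"

definition Zset :: "'n::finite cpt set" where
  "Zset = {(r0, r). (\<Sum>i\<in>UNIV. (cmod (r$i))\<^sup>2) - (cmod r0)\<^sup>2 = -1}"

definition hatZ :: "'n::finite hpt set" where
  "hatZ = {((p0, p), (q0, q)). - p0 * q0 + (\<Sum>i\<in>UNIV. p$i * q$i) = -1}"

definition cstar_act :: "complex \<Rightarrow> 'n::finite hpt \<Rightarrow> 'n hpt" where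
  "cstar_act z w = (case w of ((p0, p), (q0, q)) \<Rightarrow>
     ((z * p0, \<chi> i. z * p$i), (q0 / z, \<chi> i. q$i / z)))"

definition DeltaD :: "'n::finite cpt \<Rightarrow> 'n hpt" where
  "DeltaD r = (case r of (r0, rr) \<Rightarrow> ((r0, rr), (cnj r0, \<chi> i. cnj (rr$i))))"

definition imul :: "'n::finite hpt \<Rightarrow> 'n hpt" where
  "imul w = (case w of ((p0, p), (q0, q)) \<Rightarrow>
     ((\<i> * p0, \<chi> i. \<i> * p$i), (\<i> * q0, \<chi> i. \<i> * q$i)))"

text \<open>Holomorphic functions on hat D_n = hatZ / C^*: C^*-invariant functions on the
  complex hypersurface hatZ which are holomorphic on hatZ, i.e. locally the
  restriction of a holomorphic (complex-differentiable) function on an open subset of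
  the ambient space C^(2+2n).\<close>
definition holo_hatD :: "('n::finite hpt \<Rightarrow> complex) \<Rightarrow> bool" where
  "holo_hatD F \<longleftrightarrow>
     (\<forall>w\<in>hatZ. \<forall>z. z \<noteq> 0 \<longrightarrow> F (cstar_act z w) = F w) \<and>
     (\<forall>w\<in>hatZ. \<exists>U G G'. open U \<and> w \<in> U \<and> (\<forall>v\<in>U \<inter> hatZ. G v = F v) \<and>
        (\<forall>v\<in>U. (G has_derivative G' v) (at v) \<and>
                 (\<forall>h. G' v (imul h) = \<i> * G' v h)))"

definition chartP :: "'n::finite hpt \<Rightarrow> (complex^'n) \<times> (complex^'n)" where
  "chartP w = (case w of ((p0, p), (q0, q)) \<Rightarrow> ((\<chi> i. p$i * q0), (\<chi> i. q$i / q0)))"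

definition chartQ :: "'n::finite hpt \<Rightarrow> (complex^'n) \<times> (complex^'n)" where
  "chartQ w = (case w of ((p0, p), (q0, q)) \<Rightarrow> ((\<chi> i. p$i / p0), (\<chi> i. p0 * q$i)))"

text \<open>hat a o (hat phi^P)^(-1) and hat a o (hat phi^Q)^(-1): evaluate at any
  representative in the chart domain mapped to (x,y).\<close>
definition compP :: "('n::finite hpt \<Rightarrow> complex) \<Rightarrow> complex^'n \<Rightarrow> complex^'n \<Rightarrow> complex" where
  "compP F x y = F (SOME w. w \<in> hatZ \<and> fst (snd w) \<noteq> 0 \<and> chartP w = (x, y))"

definition compQ :: "('n::finite hpt \<Rightarrow> complex) \<Rightarrow> complex^'n \<Rightarrow> complex^'n \<Rightarrow> complex" where
  "compQ F x y = F (SOME w. w \<in> hatZ \<and> fst (fst w) \<noteq> 0 \<and> chartQ w = (x, y))"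

definition mono :: "complex^'n \<Rightarrow> ('n::finite \<Rightarrow> nat) \<Rightarrow> complex" where
  "mono x P = (\<Prod>i\<in>UNIV. (x$i) ^ P i)"

definition msize :: "('n::finite \<Rightarrow> nat) \<Rightarrow> nat" where
  "msize P = (\<Sum>i\<in>UNIV. P i)"

definition taylor_coeff ::
  "(complex^'n \<Rightarrow> complex^'n \<Rightarrow> complex) \<Rightarrow> ('n::finite \<Rightarrow> nat) \<Rightarrow> ('n \<Rightarrow> nat) \<Rightarrow> complex" where
  "taylor_coeff g = (THE c. \<exists>e>0. \<forall>x y. norm (x, y) < e \<longrightarrow>
      ((\<lambda>(P, Q). c P Q * mono x P * mono y Q) has_sum g x y) UNIV)"

definition fprime :: "('n::finite hpt \<Rightarrow> complex) \<Rightarrow> ('n \<Rightarrow> nat) \<Rightarrow> ('n \<Rightarrow> nat) \<Rightarrow> complex" where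
  "fprime F P Q = (if msize P \<ge> msize Q then taylor_coeff (compP F) P Q
                   else taylor_coeff (compQ F) P Q)"

end

theory Submission
  imports Defs "HOL-Complex_Analysis.Cauchy_Integral_Formula"
begin

text \<open>Up to the \<open>\<complex>\<^sup>*\<close>-action, a point with \<open>p\<^sub>0 q\<^sub>0 \<noteq> 0\<close> is \<open>chartP_inv x y\<close> with
  \<open>s = 1 + x \<cdot> y \<noteq> 0\<close>. Along the circle \<open>t \<mapsto> (t x, y / t)\<close>, \<open>|t| = 1\<close>, the \<open>P\<close>-chart
  expansion of \<open>F\<close> reads \<open>\<Sum> c\<^sub>P\<^sub>Q x\<^sup>P y\<^sup>Q t ^ (|P| - |Q|)\<close>, and the same orbit seen in the
  \<open>Q\<close>-chart gives \<open>\<Sum> c'\<^sub>P\<^sub>Q (x/s)\<^sup>P (s y)\<^sup>Q t ^ (|P| - |Q|)\<close>. By hypothesis \<open>c\<^sub>P\<^sub>Q = 0\<close> for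
  \<open>|P| \<ge> |Q|\<close> and \<open>c'\<^sub>P\<^sub>Q = 0\<close> for \<open>|P| < |Q|\<close>: two absolutely convergent Fourier series
  of one continuous function with disjoint frequencies, so it vanishes, and at \<open>t = 1\<close>
  so does \<open>F\<close>. The analytic input is that a continuous, separately holomorphic function
  on \<open>\<complex>\<^sup>m\<close> is everywhere the sum of its Cauchy power series, whose coefficients are
  unique.\<close>

section \<open>Fourier characters on the unit interval\<close>

definition fourier_char :: "int \<Rightarrow> real \<Rightarrow> complex" where
  "fourier_char k \<tau> = exp (2 * of_real pi * \<i> * of_int k * of_real \<tau>)"

lemma norm_fourier_char [simp]: "norm (fourier_char k \<tau>) = 1"
  by (simp add: fourier_char_def norm_exp_eq_Re)

lemma continuous_on_fourier_char [continuous_intros]: "continuous_on S (fourier_char k)"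
  unfolding fourier_char_def by (intro continuous_intros)

lemma fourier_char_mult_cnj: "fourier_char k \<tau> * cnj (fourier_char l \<tau>) = fourier_char (k - l) \<tau>"
  by (simp add: fourier_char_def exp_cnj exp_add[symmetric] algebra_simps)

lemma integral_fourier_char: "integral {0..1} (fourier_char k) = (if k = 0 then 1 else 0)"
proof (cases "k = 0")
  case True then show ?thesis by (simp add: fourier_char_def[abs_def])
next
  case False
  define c where "c = 2 * of_real pi * \<i> * (of_int k :: complex)"
  have c0: "c \<noteq> 0" using False by (simp add: c_def)
  have "((\<lambda>\<tau>. exp (c * of_real \<tau>)) has_integral (exp (c * of_real 1) / c - exp (c * of_real 0) / c)) {0..1}"
    apply (rule fundamental_theorem_of_calculus[where f="\<lambda>\<tau>. exp (c * of_real \<tau>) / c"])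
     apply simp
    apply (rule has_vector_derivative_real_field)
    apply (rule derivative_eq_intros refl)+
    using c0 by (auto simp: divide_simps)
  moreover have "exp (c * of_real 1) = 1"
    using exp_integer_2pi[of "of_int k"] by (simp add: c_def algebra_simps)
  ultimately have "((\<lambda>\<tau>. exp (c * of_real \<tau>)) has_integral 0) {0..1}" by simp
  then show ?thesis using False by (simp add: c_def fourier_char_def[abs_def] integral_unique)
qed

lemma integral_fourier_char_mult_cnj:
  "integral {0..1} (\<lambda>\<tau>. fourier_char k \<tau> * cnj (fourier_char l \<tau>)) = (if k = l then 1 else 0)"
  by (simp add: fourier_char_mult_cnj integral_fourier_char)

definition circ :: "real \<Rightarrow> complex" where
  "circ \<tau> = exp (2 * of_real pi * \<i> * of_real \<tau>)"

lemma circlepath_0_1: "circlepath 0 1 = circ"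
  by (simp add: circlepath circ_def fun_eq_iff)

lemma norm_circ [simp]: "norm (circ \<tau>) = 1"
  by (simp add: circ_def norm_exp_eq_Re)

lemma circ_0 [simp]: "circ 0 = 1"
  by (simp add: circ_def)

lemma circ_mult_cnj [simp]: "circ \<tau> * cnj (circ \<tau>) = 1"
  by (metis complex_norm_square norm_circ of_real_1 power_one)

lemma continuous_on_circ [continuous_intros]:
  "continuous_on S f \<Longrightarrow> continuous_on S (\<lambda>x. circ (f x))"
  unfolding circ_def by (intro continuous_intros)

lemma circ_pow_mult_cnj_pow: "circ \<tau> ^ a * cnj (circ \<tau>) ^ b = fourier_char (int a - int b) \<tau>"
proof -
  have "circ \<tau> ^ a = exp (of_nat a * (2 * of_real pi * \<i> * of_real \<tau>))"
    by (simp add: circ_def exp_of_nat_mult)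
  moreover have "cnj (circ \<tau>) ^ b = exp (of_nat b * (- (2 * of_real pi * \<i> * of_real \<tau>)))"
    by (simp add: circ_def exp_cnj flip: exp_of_nat_mult)
  ultimately show ?thesis
    by (simp add: fourier_char_def exp_add[symmetric] algebra_simps)
qed

lemma integral_circ_pow_mult_cnj_pow:
  "integral {0..1} (\<lambda>\<tau>. circ \<tau> ^ a * cnj (circ \<tau>) ^ b) = (if a = b then 1 else 0)"
  unfolding circ_pow_mult_cnj_pow integral_fourier_char by simp

section \<open>Termwise integration of dominated sums\<close>

lemma has_sum_tail_norm_le:
  fixes v :: "'a \<Rightarrow> 'b::banach"
  assumes sum: "(v has_sum V) A" and bnd: "\<And>\<alpha>. \<alpha> \<in> A \<Longrightarrow> norm (v \<alpha>) \<le> M \<alpha>"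
    and M: "M summable_on A" and F: "finite F" "F \<subseteq> A"
  shows "norm (V - sum v F) \<le> infsum M (A - F)"
proof -
  have MF: "M summable_on (A - F)"
    using summable_on_subset_banach[OF M, of "A - F"] by auto
  have ns: "(\<lambda>\<alpha>. norm (v \<alpha>)) summable_on (A - F)"
    by (rule summable_on_comparison_test[OF MF]) (use bnd in auto)
  have "V - sum v F = infsum v (A - F)"
    using has_sum_Diff[OF sum has_sum_finite[OF F(1)] F(2)] by (simp add: infsumI)
  also have "norm \<dots> \<le> infsum (\<lambda>\<alpha>. norm (v \<alpha>)) (A - F)"
    by (rule norm_infsum_bound[OF ns])
  also have "\<dots> \<le> infsum M (A - F)"
    by (rule infsum_mono[OF ns MF]) (use bnd in auto)
  finally show ?thesis .
qed

lemma infsum_tail_tendsto_0: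
  fixes M :: "'a \<Rightarrow> real"
  assumes M: "M summable_on A"
  shows "((\<lambda>F. infsum M (A - F)) \<longlongrightarrow> 0) (finite_subsets_at_top A)"
proof -
  have "(sum M \<longlongrightarrow> infsum M A) (finite_subsets_at_top A)"
    using M has_sum_def has_sum_infsum by blast
  then have "((\<lambda>F. infsum M A - sum M F) \<longlongrightarrow> infsum M A - infsum M A) (finite_subsets_at_top A)"
    by (intro tendsto_intros)
  moreover have "\<forall>\<^sub>F F in finite_subsets_at_top A. infsum M A - sum M F = infsum M (A - F)"
    by (rule eventually_finite_subsets_at_top_weakI) (auto simp: infsum_Diff M infsum_finite)
  ultimately show ?thesis by (simp add: tendsto_cong)
qed

lemma integrable_on_has_sum_dominated:
  fixes v :: "'a \<Rightarrow> real \<Rightarrow> 'b::banach"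
  assumes cont: "\<And>\<alpha>. \<alpha> \<in> A \<Longrightarrow> continuous_on {a..b} (v \<alpha>)"
    and bnd: "\<And>\<alpha> \<tau>. \<alpha> \<in> A \<Longrightarrow> \<tau> \<in> {a..b} \<Longrightarrow> norm (v \<alpha> \<tau>) \<le> M \<alpha>"
    and M: "M summable_on A"
    and sum: "\<And>\<tau>. \<tau> \<in> {a..b} \<Longrightarrow> ((\<lambda>\<alpha>. v \<alpha> \<tau>) has_sum V \<tau>) A"
  shows "V integrable_on {a..b}"
  unfolding box_real(2)[symmetric]
proof (rule integrable_uniform_limit)
  fix e :: real assume e: "e > 0"
  have "\<forall>\<^sub>F F in finite_subsets_at_top A. infsum M (A - F) < e \<and> finite F \<and> F \<subseteq> A"
    using order_tendstoD(2)[OF infsum_tail_tendsto_0[OF M] e] by (rule eventually_conj) auto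
  then obtain F where F: "infsum M (A - F) < e" "finite F" "F \<subseteq> A"
    using eventually_happens'[OF finite_subsets_at_top_neq_bot] by blast
  have "norm (V \<tau> - (\<Sum>\<alpha>\<in>F. v \<alpha> \<tau>)) \<le> e" if "\<tau> \<in> cbox a b" for \<tau>
    using has_sum_tail_norm_le[OF sum bnd M F(2,3), of \<tau>] F(1) that by simp
  moreover have "(\<lambda>\<tau>. \<Sum>\<alpha>\<in>F. v \<alpha> \<tau>) integrable_on cbox a b"
    using F cont by (intro integrable_sum) (auto intro: integrable_continuous_real)
  ultimately show "\<exists>g. (\<forall>x\<in>cbox a b. norm (V x - g x) \<le> e) \<and> g integrable_on cbox a b"
    by (intro exI[of _ "\<lambda>\<tau>. \<Sum>\<alpha>\<in>F. v \<alpha> \<tau>"] conjI ballI) simp_all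
qed

lemma norm_sum_integral_diff_le:
  fixes v :: "'a \<Rightarrow> real \<Rightarrow> 'b::banach"
  assumes ab: "a \<le> b" and cont: "\<And>\<alpha>. \<alpha> \<in> A \<Longrightarrow> continuous_on {a..b} (v \<alpha>)"
    and bnd: "\<And>\<alpha> \<tau>. \<alpha> \<in> A \<Longrightarrow> \<tau> \<in> {a..b} \<Longrightarrow> norm (v \<alpha> \<tau>) \<le> M \<alpha>"
    and M: "M summable_on A"
    and sum: "\<And>\<tau>. \<tau> \<in> {a..b} \<Longrightarrow> ((\<lambda>\<alpha>. v \<alpha> \<tau>) has_sum V \<tau>) A"
    and F: "finite F" "F \<subseteq> A"
  shows "norm ((\<Sum>\<alpha>\<in>F. integral {a..b} (v \<alpha>)) - integral {a..b} V) \<le> infsum M (A - F) * (b - a)"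
proof -
  have intV: "V integrable_on {a..b}"
    by (rule integrable_on_has_sum_dominated[OF cont bnd M sum])
  have intF: "(\<lambda>\<tau>. \<Sum>\<alpha>\<in>F. v \<alpha> \<tau>) integrable_on {a..b}"
    using F cont by (intro integrable_sum) (auto intro: integrable_continuous_real)
  have "0 \<le> infsum M (A - F)"
    using bnd[of _ a] ab by (intro infsum_nonneg) (force intro: order_trans[OF norm_ge_zero])
  then have "norm (integral {a..b} (\<lambda>\<tau>. (\<Sum>\<alpha>\<in>F. v \<alpha> \<tau>) - V \<tau>))
      \<le> infsum M (A - F) * Henstock_Kurzweil_Integration.content (cbox a b)"
  proof (rule has_integral_bound)
    show "((\<lambda>\<tau>. (\<Sum>\<alpha>\<in>F. v \<alpha> \<tau>) - V \<tau>) has_integral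
        integral {a..b} (\<lambda>\<tau>. (\<Sum>\<alpha>\<in>F. v \<alpha> \<tau>) - V \<tau>)) (cbox a b)"
      using integrable_integral[OF integrable_diff[OF intF intV]] by simp
    show "norm ((\<Sum>\<alpha>\<in>F. v \<alpha> \<tau>) - V \<tau>) \<le> infsum M (A - F)" if "\<tau> \<in> cbox a b" for \<tau>
      using has_sum_tail_norm_le[OF sum bnd M F, of \<tau>] that by (simp add: norm_minus_commute)
  qed
  moreover have "integral {a..b} (\<lambda>\<tau>. (\<Sum>\<alpha>\<in>F. v \<alpha> \<tau>) - V \<tau>)
      = (\<Sum>\<alpha>\<in>F. integral {a..b} (v \<alpha>)) - integral {a..b} V"
    using F cont intV
    by (subst integral_diff) (auto simp: integral_sum intF integrable_continuous_real subset_iff)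
  ultimately show ?thesis
    using ab by simp
qed

lemma has_sum_integral_termwise:
  fixes v :: "'a \<Rightarrow> real \<Rightarrow> 'b::banach"
  assumes ab: "a \<le> b" and cont: "\<And>\<alpha>. \<alpha> \<in> A \<Longrightarrow> continuous_on {a..b} (v \<alpha>)"
    and bnd: "\<And>\<alpha> \<tau>. \<alpha> \<in> A \<Longrightarrow> \<tau> \<in> {a..b} \<Longrightarrow> norm (v \<alpha> \<tau>) \<le> M \<alpha>"
    and M: "M summable_on A"
    and sum: "\<And>\<tau>. \<tau> \<in> {a..b} \<Longrightarrow> ((\<lambda>\<alpha>. v \<alpha> \<tau>) has_sum V \<tau>) A"
  shows "((\<lambda>\<alpha>. integral {a..b} (v \<alpha>)) has_sum integral {a..b} V) A"
proof -
  have "((\<lambda>F. (\<Sum>\<alpha>\<in>F. integral {a..b} (v \<alpha>)) - integral {a..b} V) \<longlongrightarrow> 0) (finite_subsets_at_top A)"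
  proof (rule Lim_null_comparison)
    show "\<forall>\<^sub>F F in finite_subsets_at_top A.
        norm ((\<Sum>\<alpha>\<in>F. integral {a..b} (v \<alpha>)) - integral {a..b} V) \<le> infsum M (A - F) * (b - a)"
      by (rule eventually_finite_subsets_at_top_weakI, rule norm_sum_integral_diff_le[OF ab cont bnd M sum])
    show "((\<lambda>F. infsum M (A - F) * (b - a)) \<longlongrightarrow> 0) (finite_subsets_at_top A)"
      using tendsto_mult_left_zero[OF infsum_tail_tendsto_0[OF M]] .
  qed
  then show ?thesis
    unfolding has_sum_def by (simp add: Lim_null[symmetric])
qed

section \<open>Fourier series with disjoint spectra\<close>

lemma has_sum_terms_0_imp_eq_0:
  fixes f :: "'a \<Rightarrow> 'b::{topological_comm_monoid_add,t2_space}"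
  assumes "(f has_sum S) A" and "\<And>x. x \<in> A \<Longrightarrow> f x = 0"
  shows "S = 0"
proof -
  have "(f has_sum 0) A" by (rule has_sum_0) (use assms(2) in simp)
  with assms(1) show ?thesis by (rule has_sum_unique)
qed

lemma integral_mult_cnj_fourier_char_eq_0:
  assumes sum: "\<And>\<tau>. ((\<lambda>p. a p * fourier_char (k p) \<tau>) has_sum \<psi> \<tau>) A"
    and abs: "(\<lambda>p. norm (a p)) summable_on A"
    and freq: "\<And>p. p \<in> A \<Longrightarrow> a p \<noteq> 0 \<Longrightarrow> k p \<noteq> l"
  shows "integral {0..1} (\<lambda>\<tau>. \<psi> \<tau> * cnj (fourier_char l \<tau>)) = 0"
proof -
  have "((\<lambda>p. integral {0..1} (\<lambda>\<tau>. a p * (fourier_char (k p) \<tau> * cnj (fourier_char l \<tau>)))) has_sum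
      integral {0..1} (\<lambda>\<tau>. \<psi> \<tau> * cnj (fourier_char l \<tau>))) A"
  proof (rule has_sum_integral_termwise[where M = "\<lambda>p. norm (a p)"])
    fix \<tau> :: real
    show "((\<lambda>p. a p * (fourier_char (k p) \<tau> * cnj (fourier_char l \<tau>))) has_sum \<psi> \<tau> * cnj (fourier_char l \<tau>)) A"
      using has_sum_cmult_left[OF sum] by (simp only: mult.assoc)
  next
    fix p and \<tau> :: real
    show "norm (a p * (fourier_char (k p) \<tau> * cnj (fourier_char l \<tau>))) \<le> norm (a p)"
      by (simp add: norm_mult)
  qed (simp_all add: abs continuous_on_mult continuous_on_cnj continuous_on_fourier_char)
  moreover have "integral {0..1} (\<lambda>\<tau>. a p * (fourier_char (k p) \<tau> * cnj (fourier_char l \<tau>))) = 0" if "p \<in> A" for p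
    using freq[OF that] by (auto simp: integral_fourier_char_mult_cnj)
  ultimately show ?thesis
    by (rule has_sum_terms_0_imp_eq_0)
qed

text \<open>Pairing one expansion with the conjugate of the other gives \<open>\<integral> \<bar>\<psi>\<bar>\<^sup>2 = 0\<close>.\<close>

lemma fourier_disjoint_spectra_eq_0:
  assumes cont: "continuous_on {0..1} \<psi>"
    and sum_a: "\<And>\<tau>. ((\<lambda>p. a p * fourier_char (k p) \<tau>) has_sum \<psi> \<tau>) A"
    and abs_a: "(\<lambda>p. norm (a p)) summable_on A"
    and sum_b: "\<And>\<tau>. ((\<lambda>q. b q * fourier_char (l q) \<tau>) has_sum \<psi> \<tau>) B"
    and abs_b: "(\<lambda>q. norm (b q)) summable_on B"
    and disj: "\<And>p q. p \<in> A \<Longrightarrow> q \<in> B \<Longrightarrow> a p \<noteq> 0 \<Longrightarrow> b q \<noteq> 0 \<Longrightarrow> k p \<noteq> l q"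
    and \<tau>: "\<tau> \<in> {0..1}"
  shows "\<psi> \<tau> = 0"
proof -
  obtain K where K: "\<And>\<tau>. \<tau> \<in> {0..1} \<Longrightarrow> norm (\<psi> \<tau>) \<le> K"
    using compact_imp_bounded[OF compact_continuous_image[OF cont compact_Icc]]
    unfolding bounded_iff by blast
  have "((\<lambda>q. integral {0..1} (\<lambda>\<tau>. cnj (b q) * (\<psi> \<tau> * cnj (fourier_char (l q) \<tau>)))) has_sum
      integral {0..1} (\<lambda>\<tau>. \<psi> \<tau> * cnj (\<psi> \<tau>))) B"
  proof (rule has_sum_integral_termwise[where M = "\<lambda>q. K * norm (b q)"])
    fix q \<tau> assume "\<tau> \<in> {0..1::real}"
    then show "norm (cnj (b q) * (\<psi> \<tau> * cnj (fourier_char (l q) \<tau>))) \<le> K * norm (b q)"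
      using K by (simp add: norm_mult mult_right_mono mult.commute)
  next
    fix \<tau> :: real
    have "((\<lambda>q. cnj (b q * fourier_char (l q) \<tau>)) has_sum cnj (\<psi> \<tau>)) B"
      by (rule has_sum_cnj_iff[THEN iffD2, OF sum_b])
    from has_sum_cmult_right[OF this, of "\<psi> \<tau>"]
    show "((\<lambda>q. cnj (b q) * (\<psi> \<tau> * cnj (fourier_char (l q) \<tau>))) has_sum \<psi> \<tau> * cnj (\<psi> \<tau>)) B"
      by (simp add: ac_simps)
  qed (simp_all add: abs_b summable_on_cmult_right cont continuous_on_mult continuous_on_cnj
                     continuous_on_fourier_char continuous_on_const)
  moreover have "integral {0..1} (\<lambda>\<tau>. cnj (b q) * (\<psi> \<tau> * cnj (fourier_char (l q) \<tau>))) = 0" if "q \<in> B" for q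
    using integral_mult_cnj_fourier_char_eq_0[OF sum_a abs_a, of "l q"] disj[OF _ that]
    by (cases "b q = 0") auto
  ultimately have "integral {0..1} (\<lambda>\<tau>. \<psi> \<tau> * cnj (\<psi> \<tau>)) = 0"
    by (rule has_sum_terms_0_imp_eq_0)
  moreover have "(\<lambda>\<tau>. \<psi> \<tau> * cnj (\<psi> \<tau>)) integrable_on {0..1}"
    by (intro integrable_continuous_real continuous_intros cont)
  ultimately have "((\<lambda>\<tau>. \<psi> \<tau> * cnj (\<psi> \<tau>)) has_integral 0) {0..1}"
    using integrable_integral by fastforce
  from has_integral_Re[OF this] have hi: "((\<lambda>\<tau>. (cmod (\<psi> \<tau>))\<^sup>2) has_integral 0) (cbox 0 1)"
    by (simp flip: complex_norm_square)
  have "continuous_on (cbox 0 1) (\<lambda>\<tau>. (cmod (\<psi> \<tau>))\<^sup>2)"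
    using cont by (intro continuous_intros) simp
  from has_integral_0_cbox_imp_0[of 0 1 "\<lambda>\<tau>. (cmod (\<psi> \<tau>))\<^sup>2", OF this _ hi] \<tau>
  have "(cmod (\<psi> \<tau>))\<^sup>2 = 0" by simp
  then show ?thesis by simp
qed

section \<open>Iterated integrals over tori\<close>

definition vec_upd :: "'a^'m \<Rightarrow> 'm \<Rightarrow> 'a \<Rightarrow> 'a^'m" where
  "vec_upd w j z = (\<chi> i. if i = j then z else w$i)"

lemma vec_upd_nth [simp]: "vec_upd w j z $ i = (if i = j then z else w$i)"
  by (simp add: vec_upd_def)

lemma vec_upd_same [simp]: "vec_upd w j (w$j) = w"
  by (simp add: vec_eq_iff)

lemma vector_smult_vec_upd [simp]: "c *s vec_upd w j z = vec_upd (c *s w) j (c * z)"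
  by (simp add: vec_eq_iff)

lemma continuous_on_vec_upd [continuous_intros]:
  "continuous_on S a \<Longrightarrow> continuous_on S b \<Longrightarrow> continuous_on S (\<lambda>x. vec_upd (a x) j (b x))"
  unfolding vec_upd_def
  by (intro continuous_on_vec_lambda, rename_tac i, case_tac "i = j") (simp_all add: continuous_on_component)

lemma continuous_on_vector_smult [continuous_intros]:
  fixes c :: "_ \<Rightarrow> 'a::real_normed_algebra"
  shows "continuous_on S c \<Longrightarrow> continuous_on S f \<Longrightarrow> continuous_on S (\<lambda>t. c t *s f t)"
  unfolding vector_scalar_mult_def by (intro continuous_intros continuous_on_component)

text \<open>Each integration over \<open>[0, 1]\<close> along \<open>circ\<close> is the normalised contour integral
  \<open>(2\<pi>\<i>)\<^sup>-\<^sup>1 \<integral> \<dots> d\<zeta> / \<zeta>\<close> over the unit circle.\<close>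

fun torus_integral :: "'m list \<Rightarrow> (complex^'m \<Rightarrow> complex) \<Rightarrow> complex^'m \<Rightarrow> complex" where
  "torus_integral [] \<phi> w = \<phi> w"
| "torus_integral (j # js) \<phi> w = integral {0..1} (\<lambda>\<tau>. torus_integral js \<phi> (vec_upd w j (circ \<tau>)))"

definition torus :: "'m list \<Rightarrow> complex^'m \<Rightarrow> (complex^'m) set" where
  "torus js w = {\<zeta>. (\<forall>i\<in>set js. norm (\<zeta>$i) = 1) \<and> (\<forall>i. i \<notin> set js \<longrightarrow> \<zeta>$i = w$i)}"

lemma torus_Nil [simp]: "torus [] w = {w}"
  by (auto simp: torus_def vec_eq_iff)

lemma torus_vec_upd_subset: "torus js (vec_upd w j (circ \<tau>)) \<subseteq> torus (j # js) w"
  by (auto simp: torus_def)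

lemma torus_integral_cong:
  assumes "\<And>i. i \<notin> set js \<Longrightarrow> w$i = w'$i"
    and "\<And>\<zeta>. (\<And>i. i \<notin> set js \<Longrightarrow> \<zeta>$i = w$i) \<Longrightarrow> \<phi> \<zeta> = \<psi> \<zeta>"
  shows "torus_integral js \<phi> w = torus_integral js \<psi> w'"
  using assms
proof (induction js arbitrary: w w')
  case Nil
  then have "w = w'" by (simp add: vec_eq_iff)
  then show ?case using Nil by simp
next
  case (Cons j js)
  show ?case
    unfolding torus_integral.simps
    by (rule integral_cong, rule Cons.IH) (use Cons.prems in auto)
qed

lemma torus_integral_cmult: "torus_integral js (\<lambda>\<zeta>. c * \<phi> \<zeta>) w = c * torus_integral js \<phi> w"
  by (induction js arbitrary: w) simp_all

lemma torus_integral_0 [simp]: "torus_integral js (\<lambda>_. 0) w = 0"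
  by (induction js arbitrary: w) simp_all

lemma continuous_on_torus_integral:
  assumes "continuous_on UNIV \<phi>"
  shows "continuous_on UNIV (torus_integral js \<phi>)"
proof (induction js)
  case Nil then show ?case using assms by (simp add: eta_contract_eq)
next
  case (Cons j js)
  have "continuous_on (UNIV \<times> cbox 0 1) (\<lambda>(w, \<tau>::real). torus_integral js \<phi> (vec_upd w j (circ \<tau>)))"
    using continuous_on_compose2[OF Cons.IH, of _ "\<lambda>p. vec_upd (fst p) j (circ (snd p))"]
    by (force simp: case_prod_unfold intro: continuous_intros)
  from integral_continuous_on_param[OF this] show ?case
    by (simp add: cbox_interval)
qed

lemma torus_integral_norm_le:
  assumes "\<And>\<zeta>. \<zeta> \<in> torus js w \<Longrightarrow> norm (\<phi> \<zeta>) \<le> B" and "0 \<le> B"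
  shows "norm (torus_integral js \<phi> w) \<le> B"
  using assms(1)
proof (induction js arbitrary: w)
  case Nil then show ?case by simp
next
  case (Cons j js)
  have bnd: "norm (torus_integral js \<phi> (vec_upd w j (circ \<tau>))) \<le> B" for \<tau>
    by (rule Cons.IH) (use Cons.prems torus_vec_upd_subset in blast)
  show ?case
  proof (cases "(\<lambda>\<tau>. torus_integral js \<phi> (vec_upd w j (circ \<tau>))) integrable_on cbox 0 1")
    case True
    with bnd show ?thesis
      using has_integral_bound[OF assms(2) integrable_integral[OF True]] by (simp add: cbox_interval)
  next
    case False
    then show ?thesis using assms(2) by (simp add: cbox_interval not_integrable_integral)
  qed
qed

lemma has_sum_torus_integral:
  assumes cont: "\<And>\<alpha>. \<alpha> \<in> A \<Longrightarrow> continuous_on UNIV (u \<alpha>)"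
    and bnd: "\<And>\<alpha> \<zeta>. \<alpha> \<in> A \<Longrightarrow> \<zeta> \<in> torus js w \<Longrightarrow> norm (u \<alpha> \<zeta>) \<le> M \<alpha>"
    and M: "M summable_on A"
    and sum: "\<And>\<zeta>. \<zeta> \<in> torus js w \<Longrightarrow> ((\<lambda>\<alpha>. u \<alpha> \<zeta>) has_sum \<phi> \<zeta>) A"
  shows "((\<lambda>\<alpha>. torus_integral js (u \<alpha>) w) has_sum torus_integral js \<phi> w) A"
  using bnd sum
proof (induction js arbitrary: w)
  case Nil then show ?case by simp
next
  case (Cons j js)
  show ?case
    unfolding torus_integral.simps
  proof (rule has_sum_integral_termwise[where M = M])
    fix \<alpha> assume "\<alpha> \<in> A"
    then show "continuous_on {0..1} (\<lambda>\<tau>. torus_integral js (u \<alpha>) (vec_upd w j (circ \<tau>)))"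
      using continuous_on_torus_integral[OF cont]
      by (force intro: continuous_on_compose2[of UNIV] continuous_intros)
  next
    fix \<alpha> \<tau> assume a: "\<alpha> \<in> A"
    have "norm (u \<alpha> (\<chi> i. if i \<in> set (j # js) then 1 else w$i)) \<le> M \<alpha>"
      by (rule Cons.prems(1)[OF a]) (auto simp: torus_def)
    then have "0 \<le> M \<alpha>" using norm_ge_zero order_trans by blast
    then show "norm (torus_integral js (u \<alpha>) (vec_upd w j (circ \<tau>))) \<le> M \<alpha>"
      by (rule torus_integral_norm_le[rotated]) (use Cons.prems(1)[OF a] torus_vec_upd_subset in blast)
  next
    fix \<tau> :: real
    show "((\<lambda>\<alpha>. torus_integral js (u \<alpha>) (vec_upd w j (circ \<tau>))) has_sum
        torus_integral js \<phi> (vec_upd w j (circ \<tau>))) A"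
      by (rule Cons.IH) (use Cons.prems torus_vec_upd_subset in blast)+
  qed (use M in auto)
qed

lemma torus_integral_prod:
  assumes "distinct js"
  shows "torus_integral js (\<lambda>\<zeta>. \<Prod>i\<in>set js. g i (\<zeta>$i)) w
       = (\<Prod>i\<in>set js. integral {0..1} (\<lambda>\<tau>. g i (circ \<tau>)))"
  using assms
proof (induction js arbitrary: w)
  case Nil then show ?case by simp
next
  case (Cons j js)
  have jn: "j \<notin> set js" using Cons.prems by simp
  have "torus_integral js (\<lambda>\<zeta>. \<Prod>i\<in>set (j # js). g i (\<zeta>$i)) (vec_upd w j (circ \<tau>))
      = g j (circ \<tau>) * (\<Prod>i\<in>set js. integral {0..1} (\<lambda>\<tau>. g i (circ \<tau>)))" for \<tau>
  proof -
    have "torus_integral js (\<lambda>\<zeta>. \<Prod>i\<in>set (j # js). g i (\<zeta>$i)) (vec_upd w j (circ \<tau>))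
        = torus_integral js (\<lambda>\<zeta>. g j (circ \<tau>) * (\<Prod>i\<in>set js. g i (\<zeta>$i))) (vec_upd w j (circ \<tau>))"
      by (rule torus_integral_cong) (use jn in auto)
    then show ?thesis
      using Cons.IH Cons.prems by (simp add: torus_integral_cmult)
  qed
  then show ?case
    using jn by (simp add: mult.commute)
qed

section \<open>Cauchy's integral formula on polydiscs\<close>

lemma Cauchy_integral_circ:
  assumes hol: "h holomorphic_on UNIV" and a: "norm a < 1"
  shows "h a = integral {0..1} (\<lambda>\<tau>. h (circ \<tau>) * (circ \<tau> / (circ \<tau> - a)))"
proof -
  have "((\<lambda>u. h u / (u - a)) has_contour_integral (2 * of_real pi * \<i> * h a)) (circlepath 0 1)"
    by (rule Cauchy_integral_circlepath)
       (use hol a in \<open>auto intro: holomorphic_on_imp_continuous_on holomorphic_on_subset\<close>)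
  then have "((\<lambda>x. h (circ x) / (circ x - a) * vector_derivative circ (at x within {0..1}))
              has_integral (2 * of_real pi * \<i> * h a)) {0..1}"
    by (simp add: has_contour_integral_def circlepath_0_1)
  then have "((\<lambda>x. h (circ x) / (circ x - a) * (2 * of_real pi * \<i> * circ x))
              has_integral (2 * of_real pi * \<i> * h a)) {0..1}"
    by (rule has_integral_eq[rotated])
       (use vector_derivative_circlepath01[of _ 0 1] in \<open>simp add: circlepath_0_1 circ_def\<close>)
  from has_integral_mult_right[OF this, of "inverse (2 * of_real pi * \<i>)"]
  have "((\<lambda>x. h (circ x) * (circ x / (circ x - a))) has_integral h a) {0..1}"
    by (simp add: field_simps)
  then show ?thesis by (simp add: integral_unique)
qed

definition separately_holomorphic :: "(complex^'m \<Rightarrow> complex) \<Rightarrow> bool" where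
  "separately_holomorphic f \<longleftrightarrow> (\<forall>w j. (\<lambda>\<zeta>. f (vec_upd w j \<zeta>)) holomorphic_on UNIV)"

lemma Cauchy_integral_polydisc:
  fixes f :: "complex^'m \<Rightarrow> complex"
  assumes hol: "separately_holomorphic f"
    and "distinct js" and "\<And>i. i \<in> set js \<Longrightarrow> norm (z$i) < 1"
  shows "f z = torus_integral js (\<lambda>\<zeta>. f \<zeta> * (\<Prod>i\<in>set js. \<zeta>$i / (\<zeta>$i - z$i))) z"
  using assms(2,3)
proof (induction js arbitrary: z)
  case Nil then show ?case by simp
next
  case (Cons j js)
  have jn: "j \<notin> set js" and dj: "distinct js" using Cons.prems by auto
  have "f z = f (vec_upd z j (z$j))" by simp
  also have "\<dots> = integral {0..1} (\<lambda>\<tau>. f (vec_upd z j (circ \<tau>)) * (circ \<tau> / (circ \<tau> - z$j)))"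
    using hol Cons.prems(2) by (intro Cauchy_integral_circ) (auto simp: separately_holomorphic_def)
  also have "\<dots> = torus_integral (j # js) (\<lambda>\<zeta>. f \<zeta> * (\<Prod>i\<in>set (j # js). \<zeta>$i / (\<zeta>$i - z$i))) z"
    unfolding torus_integral.simps
  proof (rule integral_cong)
    fix \<tau>
    define z' where "z' = vec_upd z j (circ \<tau>)"
    have zz: "z'$i = z$i" if "i \<in> set js" for i using that jn by (auto simp: z'_def)
    have "f z' = torus_integral js (\<lambda>\<zeta>. f \<zeta> * (\<Prod>i\<in>set js. \<zeta>$i / (\<zeta>$i - z'$i))) z'"
      using Cons.IH[OF dj, of z'] Cons.prems(2) zz by simp
    then have "f z' * (circ \<tau> / (circ \<tau> - z$j))
        = torus_integral js (\<lambda>\<zeta>. (circ \<tau> / (circ \<tau> - z$j)) * (f \<zeta> * (\<Prod>i\<in>set js. \<zeta>$i / (\<zeta>$i - z'$i)))) z'"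
      unfolding torus_integral_cmult by (simp only: mult.commute)
    also have "\<dots> = torus_integral js (\<lambda>\<zeta>. f \<zeta> * (\<Prod>i\<in>set (j # js). \<zeta>$i / (\<zeta>$i - z$i))) z'"
    proof (rule torus_integral_cong)
      fix \<zeta> :: "complex^'m" assume a: "\<And>i. i \<notin> set js \<Longrightarrow> \<zeta>$i = z'$i"
      have "\<zeta>$j = circ \<tau>" using a[of j] jn by (simp add: z'_def)
      moreover have "(\<Prod>i\<in>set js. \<zeta>$i / (\<zeta>$i - z'$i)) = (\<Prod>i\<in>set js. \<zeta>$i / (\<zeta>$i - z$i))"
        by (rule prod.cong) (simp_all add: zz)
      ultimately show "circ \<tau> / (circ \<tau> - z$j) * (f \<zeta> * (\<Prod>i\<in>set js. \<zeta>$i / (\<zeta>$i - z'$i)))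
          = f \<zeta> * (\<Prod>i\<in>set (j # js). \<zeta>$i / (\<zeta>$i - z$i))"
        using jn by (simp add: mult.left_commute)
    qed simp
    finally show "f (vec_upd z j (circ \<tau>)) * (circ \<tau> / (circ \<tau> - z$j))
        = torus_integral js (\<lambda>\<zeta>. f \<zeta> * (\<Prod>i\<in>set (j # js). \<zeta>$i / (\<zeta>$i - z$i))) (vec_upd z j (circ \<tau>))"
      unfolding z'_def .
  qed
  finally show ?case .
qed

section \<open>Power series expansion of separately holomorphic functions\<close>

definition univ_list :: "'m::finite list" where
  "univ_list = (SOME js. distinct js \<and> set js = UNIV)"

lemma distinct_univ_list: "distinct (univ_list :: 'm::finite list)"
  and set_univ_list [simp]: "set (univ_list :: 'm::finite list) = UNIV"
proof -
  have "\<exists>js::'m list. distinct js \<and> set js = UNIV"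
    using finite_distinct_list[of "UNIV::'m set"] by auto
  then have "distinct (univ_list :: 'm list) \<and> set (univ_list :: 'm list) = UNIV"
    unfolding univ_list_def by (rule someI_ex)
  then show "distinct (univ_list :: 'm list)" "set (univ_list :: 'm list) = UNIV" by auto
qed

lemma torus_univ_list: "torus univ_list w = {\<zeta>. \<forall>i. norm (\<zeta>$i) = 1}"
  by (auto simp: torus_def)

text \<open>The base point \<open>0\<close> is immaterial, since every coordinate is integrated.\<close>

definition cauchy_coeff :: "(complex^'m::finite \<Rightarrow> complex) \<Rightarrow> ('m \<Rightarrow> nat) \<Rightarrow> complex" where
  "cauchy_coeff f \<alpha> = torus_integral univ_list (\<lambda>\<zeta>. f \<zeta> * (\<Prod>i\<in>UNIV. cnj (\<zeta>$i) ^ \<alpha> i)) 0"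

lemma mono_vector_smult: "mono (c *s x) P = c ^ msize P * mono x P"
  by (simp add: mono_def msize_def power_mult_distrib prod.distrib power_sum)

lemma has_sum_prod_multiindex:
  fixes g :: "'i::finite \<Rightarrow> nat \<Rightarrow> 'c::{real_normed_field,banach,second_countable_topology}"
  assumes "\<And>i. (\<lambda>k. norm (g i k)) summable_on UNIV"
  shows "((\<lambda>\<alpha>. \<Prod>i\<in>UNIV. g i (\<alpha> i)) has_sum (\<Prod>i\<in>UNIV. infsum (g i) UNIV)) UNIV"
proof -
  have P: "PiE UNIV (\<lambda>_. UNIV) = (UNIV :: ('i \<Rightarrow> nat) set)"
    by (simp add: PiE_UNIV_domain)
  have "Infinite_Set_Sum.abs_summable_on (g i) UNIV" for i
    using abs_summable_equivalent assms by blast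
  then have "Infinite_Set_Sum.abs_summable_on (\<lambda>\<alpha>. \<Prod>i\<in>UNIV. g i (\<alpha> i)) (PiE UNIV (\<lambda>_. UNIV))"
    by (intro abs_summable_on_prod_PiE) auto
  then have "(\<lambda>\<alpha>. \<Prod>i\<in>UNIV. g i (\<alpha> i)) summable_on UNIV"
    unfolding P using abs_summable_equivalent abs_summable_summable by blast
  moreover have "infsum (\<lambda>\<alpha>. \<Prod>i\<in>UNIV. g i (\<alpha> i)) UNIV = (\<Prod>i\<in>UNIV. infsum (g i) UNIV)"
    using infsum_prod_PiE_abs[of UNIV g "\<lambda>_. UNIV"] assms by (simp add: P)
  ultimately show ?thesis
    using has_sum_infsum by fastforce
qed

lemma summable_on_norm_power:
  "norm (x::'a::{real_normed_field,banach}) < 1 \<Longrightarrow> (\<lambda>k. norm (x ^ k)) summable_on UNIV"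
  using summable_geometric[of "norm x"]
  by (intro norm_summable_imp_summable_on) (auto simp: norm_power)

lemma has_sum_Cauchy_kernel:
  assumes "norm \<zeta> = 1" "norm (z::complex) < 1"
  shows "((\<lambda>k. (z * cnj \<zeta>) ^ k) has_sum \<zeta> / (\<zeta> - z)) UNIV"
proof -
  have n: "norm (z * cnj \<zeta>) < 1" using assms by (simp add: norm_mult)
  have "((\<lambda>k. (z * cnj \<zeta>) ^ k) has_sum 1 / (1 - z * cnj \<zeta>)) UNIV"
    using summable_geometric[of "norm (z * cnj \<zeta>)"] n
    by (intro norm_summable_imp_has_sum geometric_sums) (auto simp: norm_power)
  moreover have "1 / (1 - z * cnj \<zeta>) = \<zeta> / (\<zeta> - z)"
  proof -
    have "\<zeta> * cnj \<zeta> = 1" using assms(1) by (metis complex_norm_square of_real_1 power_one)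
    then have "\<zeta> * (1 - z * cnj \<zeta>) = \<zeta> - z" by (simp add: algebra_simps)
    moreover have "\<zeta> - z \<noteq> 0" "1 - z * cnj \<zeta> \<noteq> 0" using assms n by auto
    ultimately show ?thesis by (simp add: field_simps)
  qed
  ultimately show ?thesis by simp
qed

lemma norm_vec_le_card:
  fixes x :: "'a::real_normed_vector^'n"
  assumes "\<And>i. norm (x$i) \<le> e"
  shows "norm x \<le> real CARD('n) * e"
proof -
  have "norm x \<le> (\<Sum>i\<in>UNIV. norm (x$i))"
    unfolding norm_vec_def by (rule L2_set_le_sum) simp
  also have "\<dots> \<le> real CARD('n) * e"
    using sum_mono[of UNIV "\<lambda>i. norm (x$i)" "\<lambda>_. e"] assms by simp
  finally show ?thesis .
qed

lemma torus_bounded: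
  fixes f :: "complex^'m::finite \<Rightarrow> complex"
  assumes "continuous_on UNIV f"
  obtains K where "\<And>\<zeta>. \<forall>i. norm (\<zeta>$i) = 1 \<Longrightarrow> norm (f \<zeta>) \<le> K"
proof -
  have "bounded (f ` cball 0 (real CARD('m)))"
    using assms by (intro compact_imp_bounded compact_continuous_image) (auto intro: continuous_on_subset)
  then obtain K where K: "\<And>x. x \<in> cball 0 (real CARD('m)) \<Longrightarrow> norm (f x) \<le> K"
    unfolding bounded_iff by blast
  have "\<zeta> \<in> cball 0 (real CARD('m))" if "\<forall>i. norm (\<zeta>$i) = 1" for \<zeta> :: "complex^'m"
    using norm_vec_le_card[of \<zeta> 1] that by simp
  with K that[of K] show ?thesis by auto
qed

lemma summable_on_prod_norm_power:
  assumes "\<And>i. norm (z$i) < 1"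
  shows "(\<lambda>\<alpha>. \<Prod>i\<in>UNIV. norm (z$i) ^ \<alpha> i) summable_on UNIV"
proof -
  have "(\<lambda>k. norm (norm (z$i) ^ k)) summable_on UNIV" for i
    by (rule summable_on_norm_power) (simp add: assms)
  from has_sum_prod_multiindex[of "\<lambda>i k. norm (z$i) ^ k", OF this] show ?thesis
    by (auto simp: summable_on_def)
qed

lemma has_sum_Cauchy_kernel_prod:
  assumes t: "\<forall>i. norm (\<zeta>$i) = 1" and z: "\<And>i. norm (z$i) < 1"
  shows "((\<lambda>\<alpha>. mono z \<alpha> * (\<Prod>i\<in>UNIV. cnj (\<zeta>$i) ^ \<alpha> i)) has_sum (\<Prod>i\<in>UNIV. \<zeta>$i / (\<zeta>$i - z$i))) UNIV"
proof -
  have k: "((\<lambda>k. (z$i * cnj (\<zeta>$i)) ^ k) has_sum \<zeta>$i / (\<zeta>$i - z$i)) UNIV" for i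
    by (rule has_sum_Cauchy_kernel) (use t z in auto)
  have "((\<lambda>\<alpha>. \<Prod>i\<in>UNIV. (z$i * cnj (\<zeta>$i)) ^ \<alpha> i) has_sum (\<Prod>i\<in>UNIV. \<zeta>$i / (\<zeta>$i - z$i))) UNIV"
    using has_sum_prod_multiindex[of "\<lambda>i k. (z$i * cnj (\<zeta>$i)) ^ k"] t z
    by (simp add: infsumI[OF k] summable_on_norm_power norm_mult)
  then show ?thesis
    by (simp add: mono_def power_mult_distrib prod.distrib)
qed

text \<open>Expanding the Cauchy kernel \<open>\<Prod> \<zeta>\<^sub>i / (\<zeta>\<^sub>i - z\<^sub>i)\<close> into a geometric series in
  \<open>z\<^sub>i cnj \<zeta>\<^sub>i\<close> and integrating termwise.\<close>

lemma has_sum_cauchy_coeff_unit_polydisc: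
  fixes f :: "complex^'m::finite \<Rightarrow> complex"
  assumes cont: "continuous_on UNIV f" and hol: "separately_holomorphic f"
    and z: "\<And>i. norm (z$i) < 1"
  shows "((\<lambda>\<alpha>. cauchy_coeff f \<alpha> * mono z \<alpha>) has_sum f z) UNIV"
proof -
  obtain K where K: "\<And>\<zeta>. \<forall>i. norm (\<zeta>$i) = 1 \<Longrightarrow> norm (f \<zeta>) \<le> K"
    using torus_bounded[OF cont] by blast
  define \<phi> where "\<phi> \<zeta> = f \<zeta> * (\<Prod>i\<in>UNIV. \<zeta>$i / (\<zeta>$i - z$i))" for \<zeta>
  define u where "u \<alpha> \<zeta> = mono z \<alpha> * (f \<zeta> * (\<Prod>i\<in>UNIV. cnj (\<zeta>$i) ^ \<alpha> i))" for \<alpha> \<zeta>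
  define M where "M \<alpha> = K * (\<Prod>i\<in>UNIV. norm (z$i) ^ \<alpha> i)" for \<alpha>
  have "((\<lambda>\<alpha>. torus_integral univ_list (u \<alpha>) z) has_sum torus_integral univ_list \<phi> z) UNIV"
  proof (rule has_sum_torus_integral[where M = M])
    fix \<alpha> show "continuous_on UNIV (u \<alpha>)" unfolding u_def by (intro continuous_intros cont)
  next
    fix \<alpha> \<zeta> assume "\<zeta> \<in> torus univ_list z"
    then have t: "\<forall>i. norm (\<zeta>$i) = 1" by (simp add: torus_univ_list)
    have "norm (u \<alpha> \<zeta>) = norm (f \<zeta>) * (\<Prod>i\<in>UNIV. norm (z$i) ^ \<alpha> i)"
      using t by (simp add: u_def mono_def norm_mult prod_norm[symmetric] norm_power)
    also have "\<dots> \<le> M \<alpha>"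
      unfolding M_def by (rule mult_right_mono[OF K[OF t]]) (simp add: prod_nonneg)
    finally show "norm (u \<alpha> \<zeta>) \<le> M \<alpha>" .
  next
    show "M summable_on UNIV"
      unfolding M_def by (rule summable_on_cmult_right[OF summable_on_prod_norm_power[OF z]])
  next
    fix \<zeta> assume "\<zeta> \<in> torus univ_list z"
    then have "((\<lambda>\<alpha>. mono z \<alpha> * (\<Prod>i\<in>UNIV. cnj (\<zeta>$i) ^ \<alpha> i)) has_sum (\<Prod>i\<in>UNIV. \<zeta>$i / (\<zeta>$i - z$i))) UNIV"
      using z by (intro has_sum_Cauchy_kernel_prod) (auto simp: torus_univ_list)
    from has_sum_cmult_right[OF this, of "f \<zeta>"]
    show "((\<lambda>\<alpha>. u \<alpha> \<zeta>) has_sum \<phi> \<zeta>) UNIV"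
      by (simp add: \<phi>_def u_def mult.left_commute)
  qed
  moreover have "torus_integral univ_list (u \<alpha>) z = mono z \<alpha> * cauchy_coeff f \<alpha>" for \<alpha>
    unfolding u_def torus_integral_cmult cauchy_coeff_def
    by (rule arg_cong[where f="(*) (mono z \<alpha>)"], rule torus_integral_cong) auto
  moreover have "f z = torus_integral univ_list \<phi> z"
    using Cauchy_integral_polydisc[OF hol distinct_univ_list, of z] z unfolding \<phi>_def by simp
  ultimately show ?thesis by (simp add: mult.commute)
qed

lemma torus_integral_monomial_mult_cnj:
  "torus_integral (univ_list :: 'm::finite list) (\<lambda>\<zeta>. mono \<zeta> \<beta> * (\<Prod>i\<in>UNIV. cnj (\<zeta>$i) ^ \<alpha> i)) w
   = (if \<beta> = \<alpha> then 1 else 0)"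
proof -
  have "torus_integral (univ_list :: 'm list) (\<lambda>\<zeta>. mono \<zeta> \<beta> * (\<Prod>i\<in>UNIV. cnj (\<zeta>$i) ^ \<alpha> i)) w
      = (\<Prod>i\<in>UNIV. integral {0..1} (\<lambda>\<tau>. circ \<tau> ^ \<beta> i * cnj (circ \<tau>) ^ \<alpha> i))"
    using torus_integral_prod[OF distinct_univ_list, of "\<lambda>i x. x ^ \<beta> i * cnj x ^ \<alpha> i" w]
    by (simp add: mono_def prod.distrib)
  also have "\<dots> = (\<Prod>i\<in>UNIV. if \<beta> i = \<alpha> i then 1 else 0)"
    by (simp only: integral_circ_pow_mult_cnj_pow)
  also have "\<dots> = (if \<beta> = \<alpha> then 1 else 0)"
    by (auto simp: fun_eq_iff intro: prod_zero)
  finally show ?thesis .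
qed

lemma coeffs_eq_0_if_power_series_eq_0_on_torus:
  fixes d :: "('m::finite \<Rightarrow> nat) \<Rightarrow> complex"
  assumes "\<And>\<zeta>. \<forall>i. norm (\<zeta>$i) = 1 \<Longrightarrow> ((\<lambda>\<beta>. d \<beta> * mono \<zeta> \<beta>) has_sum 0) UNIV"
  shows "d = (\<lambda>_. 0)"
proof
  fix \<alpha>
  define one :: "complex^'m" where "one = (\<chi> i. 1)"
  have "((\<lambda>\<beta>. d \<beta> * mono one \<beta>) has_sum 0) UNIV"
    by (rule assms) (simp add: one_def)
  then have "(\<lambda>\<beta>. norm (d \<beta>)) summable_on UNIV"
    using summable_on_iff_abs_summable_on_complex
    by (force simp: one_def mono_def summable_on_def)
  define u where "u \<beta> \<zeta> = d \<beta> * (mono \<zeta> \<beta> * (\<Prod>i\<in>UNIV. cnj (\<zeta>$i) ^ \<alpha> i))" for \<beta> \<zeta>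
  have "((\<lambda>\<beta>. torus_integral univ_list (u \<beta>) one) has_sum torus_integral univ_list (\<lambda>_. 0) one) UNIV"
  proof (rule has_sum_torus_integral[where M = "\<lambda>\<beta>. norm (d \<beta>)"])
    fix \<beta> show "continuous_on UNIV (u \<beta>)"
      unfolding u_def mono_def by (intro continuous_intros)
  next
    fix \<beta> \<zeta> assume "\<zeta> \<in> torus univ_list one"
    then show "norm (u \<beta> \<zeta>) \<le> norm (d \<beta>)"
      by (simp add: torus_univ_list u_def mono_def norm_mult prod_norm[symmetric] norm_power)
  next
    fix \<zeta> assume "\<zeta> \<in> torus univ_list one"
    then have "((\<lambda>\<beta>. d \<beta> * mono \<zeta> \<beta> * (\<Prod>i\<in>UNIV. cnj (\<zeta>$i) ^ \<alpha> i)) has_sum 0) UNIV"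
      using has_sum_cmult_left[OF assms] by (force simp: torus_univ_list)
    then show "((\<lambda>\<beta>. u \<beta> \<zeta>) has_sum 0) UNIV"
      unfolding u_def by (simp only: mult.assoc)
  qed fact
  moreover have "torus_integral univ_list (u \<beta>) one = (if \<beta> = \<alpha> then d \<alpha> else 0)" for \<beta>
    unfolding u_def torus_integral_cmult torus_integral_monomial_mult_cnj by simp
  ultimately have "((\<lambda>\<beta>. if \<beta> = \<alpha> then d \<alpha> else 0) has_sum 0) UNIV"
    by simp
  moreover have "((\<lambda>\<beta>. if \<beta> = \<alpha> then d \<alpha> else 0) has_sum d \<alpha>) UNIV"
    by (rule has_sum_finite_neutralI[of "{\<alpha>}"]) auto
  ultimately show "d \<alpha> = 0" using has_sum_unique by blast
qed

lemma power_series_coeffs_unique: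
  fixes c c' :: "('m::finite \<Rightarrow> nat) \<Rightarrow> complex"
  assumes e: "e > 0" and e': "e' > 0"
    and h: "\<And>z. (\<And>i. norm (z$i) < e) \<Longrightarrow> ((\<lambda>\<alpha>. c \<alpha> * mono z \<alpha>) has_sum f z) UNIV"
    and h': "\<And>z. (\<And>i. norm (z$i) < e') \<Longrightarrow> ((\<lambda>\<alpha>. c' \<alpha> * mono z \<alpha>) has_sum f z) UNIV"
  shows "c = c'"
proof -
  define r where "r = complex_of_real (min e e' / 2)"
  have r: "r \<noteq> 0" "norm r < e" "norm r < e'" using e e' by (auto simp: r_def)
  have "(\<lambda>\<beta>. (c \<beta> - c' \<beta>) * r ^ msize \<beta>) = (\<lambda>_. 0)"
  proof (rule coeffs_eq_0_if_power_series_eq_0_on_torus)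
    fix \<zeta> :: "complex^'m" assume t: "\<forall>i. norm (\<zeta>$i) = 1"
    then have "norm ((r *s \<zeta>) $ i) < e" "norm ((r *s \<zeta>) $ i) < e'" for i
      using r by (auto simp: norm_mult)
    from has_sum_add[OF h[OF this(1)] has_sum_uminusI[OF h'[OF this(2)]]]
    show "((\<lambda>\<beta>. (c \<beta> - c' \<beta>) * r ^ msize \<beta> * mono \<zeta> \<beta>) has_sum 0) UNIV"
      by (simp add: mono_vector_smult algebra_simps)
  qed
  then show ?thesis using r(1) by (simp add: fun_eq_iff)
qed

lemma separately_holomorphic_vector_smult:
  assumes "separately_holomorphic f"
  shows "separately_holomorphic (\<lambda>w. f (c *s w))"
  unfolding separately_holomorphic_def
proof (intro allI)
  fix w j
  have "(\<lambda>\<zeta>. f (c *s vec_upd w j \<zeta>)) = (\<lambda>\<zeta>. f (vec_upd (c *s w) j \<zeta>)) \<circ> (\<lambda>\<zeta>. c * \<zeta>)"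
    by (simp add: fun_eq_iff)
  then show "(\<lambda>\<zeta>. f (c *s vec_upd w j \<zeta>)) holomorphic_on UNIV"
    using assms unfolding separately_holomorphic_def
    by (auto intro!: holomorphic_on_compose holomorphic_intros intro: holomorphic_on_subset)
qed

text \<open>Rescaling reduces the expansion at an arbitrary point to the unit polydisc; by
  uniqueness the coefficients obtained for every radius are the same.\<close>

lemma has_sum_cauchy_coeff:
  fixes f :: "complex^'m::finite \<Rightarrow> complex"
  assumes cont: "continuous_on UNIV f" and hol: "separately_holomorphic f"
  shows "((\<lambda>\<alpha>. cauchy_coeff f \<alpha> * mono z \<alpha>) has_sum f z) UNIV"
proof -
  define R where "R = 1 + (\<Sum>i\<in>UNIV. norm (z$i))"
  have R0: "R > 0" unfolding R_def by (smt (verit) sum_nonneg norm_ge_zero)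
  have Rz: "norm (z$i) < R" for i
    using member_le_sum[of i UNIV "\<lambda>i. norm (z$i)"] unfolding R_def by simp
  define Rc where "Rc = complex_of_real R"
  have Rc0: "Rc \<noteq> 0" using R0 by (simp add: Rc_def)
  define fR where "fR w = f (Rc *s w)" for w
  have contR: "continuous_on UNIV fR"
    unfolding fR_def by (rule continuous_on_compose2[OF cont]) (auto intro: continuous_intros)
  have holR: "separately_holomorphic fR"
    unfolding fR_def by (rule separately_holomorphic_vector_smult[OF hol])
  define c where "c \<alpha> = cauchy_coeff fR \<alpha> / Rc ^ msize \<alpha>" for \<alpha>
  have hc: "((\<lambda>\<alpha>. c \<alpha> * mono v \<alpha>) has_sum f v) UNIV" if v: "\<And>i. norm (v$i) < R" for v
  proof -
    have "norm (((1 / Rc) *s v) $ i) < 1" for i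
      using v[of i] R0 by (simp add: norm_mult Rc_def norm_divide field_simps)
    from has_sum_cauchy_coeff_unit_polydisc[OF contR holR this]
    show ?thesis
      using Rc0 by (simp add: c_def fR_def mono_vector_smult power_divide vector_smult_assoc)
  qed
  have "c = cauchy_coeff f"
    using power_series_coeffs_unique[OF R0 zero_less_one hc has_sum_cauchy_coeff_unit_polydisc[OF cont hol]] .
  then show ?thesis using hc[OF Rz] by simp
qed

section \<open>Holomorphic functions on \<open>hat D\<^sub>n\<close>\<close>

lemma holo_hatD_cstar_invariant:
  "holo_hatD F \<Longrightarrow> w \<in> hatZ \<Longrightarrow> z \<noteq> 0 \<Longrightarrow> F (cstar_act z w) = F w"
  unfolding holo_hatD_def by blast

lemma holo_hatD_local:
  assumes "holo_hatD F" and "w \<in> hatZ"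
  obtains U G G' where "open U" "w \<in> U" "\<And>v. v \<in> U \<inter> hatZ \<Longrightarrow> G v = F v"
    "\<And>v. v \<in> U \<Longrightarrow> (G has_derivative G' v) (at v)"
    "\<And>v h. v \<in> U \<Longrightarrow> G' v (imul h) = \<i> * G' v h"
  using assms unfolding holo_hatD_def by metis

lemma continuous_on_hatZ_holo_hatD:
  fixes F :: "'n::finite hpt \<Rightarrow> complex"
  assumes "holo_hatD F"
  shows "continuous_on hatZ F"
  unfolding continuous_on_eq_continuous_within
proof
  fix w :: "'n hpt" assume w: "w \<in> hatZ"
  obtain U G G' where U: "open U" "w \<in> U" and GF: "\<And>v. v \<in> U \<inter> hatZ \<Longrightarrow> G v = F v"
    and GD: "\<And>v. v \<in> U \<Longrightarrow> (G has_derivative G' v) (at v)"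
    using holo_hatD_local[OF assms w] by metis
  have "continuous (at w within hatZ) G"
    using has_derivative_continuous[OF GD[OF U(2)]] continuous_at_imp_continuous_within by blast
  moreover obtain d where "d > 0" "ball w d \<subseteq> U" using U open_contains_ball by blast
  ultimately show "continuous (at w within hatZ) F"
    using GF w by (elim continuous_transform_within) (auto simp: dist_commute)
qed

definition hscale :: "complex \<Rightarrow> 'n::finite hpt \<Rightarrow> 'n hpt" where
  "hscale c w = (case w of ((p0, p), (q0, q)) \<Rightarrow> ((c * p0, c *s p), (c * q0, c *s q)))"

lemma hscale_simp [simp]: "hscale c ((p0, p), (q0, q)) = ((c * p0, c *s p), (c * q0, c *s q))"
  by (simp add: hscale_def)

lemma imul_eq_hscale: "imul w = hscale \<i> w"
  by (cases w) (auto simp: imul_def vector_scalar_mult_def)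

lemma hscale_Re_Im: "hscale h B = Re h *\<^sub>R B + Im h *\<^sub>R hscale \<i> B"
proof -
  have "h * z = Re h *\<^sub>R z + Im h *\<^sub>R (\<i> * z)" for z
    by (simp add: complex_eq_iff)
  then show ?thesis
    by (cases B) (auto simp: vec_eq_iff)
qed

lemma linear_hscale: "linear (\<lambda>h. hscale h B)"
  by (cases B) (auto intro!: linearI simp: vec_eq_iff algebra_simps)

lemma linear_imul_hscale:
  assumes "linear T" and "\<And>h. T (imul h) = \<i> * T h"
  shows "T (hscale \<zeta> B) = \<zeta> * T B"
proof -
  have "T (hscale \<zeta> B) = Re \<zeta> *\<^sub>R T B + Im \<zeta> *\<^sub>R T (imul B)"
    using assms(1) by (simp add: hscale_Re_Im[of \<zeta>] imul_eq_hscale linear_add linear_scale)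
  also have "\<dots> = \<zeta> * T B"
    by (simp add: assms(2) scaleR_conv_of_real complex_eq_iff algebra_simps)
  finally show ?thesis .
qed

lemma holomorphic_on_affine_line:
  fixes F :: "'n::finite hpt \<Rightarrow> complex"
  assumes holo: "holo_hatD F" and LZ: "\<And>\<zeta>. A + hscale \<zeta> B \<in> hatZ"
  shows "(\<lambda>\<zeta>. F (A + hscale \<zeta> B)) holomorphic_on UNIV"
proof -
  define L where "L \<zeta> = A + hscale \<zeta> B" for \<zeta>
  have dL: "(L has_derivative (\<lambda>h. hscale h B)) (at \<zeta>0)" for \<zeta>0
    unfolding L_def using linear_hscale[of B] linear_conv_bounded_linear
    by (auto intro!: derivative_eq_intros bounded_linear_imp_has_derivative)
  have "(\<lambda>\<zeta>. F (L \<zeta>)) field_differentiable at \<zeta>0" for \<zeta>0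
  proof -
    obtain U G G' where U: "open U" "L \<zeta>0 \<in> U" and GF: "\<And>v. v \<in> U \<inter> hatZ \<Longrightarrow> G v = F v"
      and dG: "(G has_derivative G' (L \<zeta>0)) (at (L \<zeta>0))"
      and Gi: "\<And>h. G' (L \<zeta>0) (imul h) = \<i> * G' (L \<zeta>0) h"
      using holo_hatD_local[OF holo LZ[of \<zeta>0, folded L_def]] by metis
    have "linear (G' (L \<zeta>0))"
      using has_derivative_bounded_linear[OF dG] bounded_linear.linear by blast
    with Gi have "((\<lambda>\<zeta>. G (L \<zeta>)) has_field_derivative G' (L \<zeta>0) B) (at \<zeta>0)"
      using diff_chain_at[OF dL dG]
      by (simp add: has_field_derivative_def o_def linear_imul_hscale mult.commute[of _ "G' (L \<zeta>0) B"])
    moreover have "open (L -` U)"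
      using continuous_open_vimage[OF U(1)] has_derivative_continuous[OF dL] by blast
    moreover have "G (L \<zeta>) = F (L \<zeta>)" if "\<zeta> \<in> L -` U" for \<zeta>
      using that GF LZ by (simp add: L_def)
    ultimately show ?thesis
      using U(2) unfolding field_differentiable_def
      by (blast intro: has_field_derivative_transform_within_open)
  qed
  then show ?thesis
    unfolding L_def by (simp add: holomorphic_on_def field_differentiable_at_within)
qed

section \<open>The charts\<close>

definition cdot :: "complex^'n \<Rightarrow> complex^'n \<Rightarrow> complex" where
  "cdot x y = (\<Sum>i\<in>UNIV. x$i * y$i)"

lemma cdot_vector_smult [simp]: "cdot (a *s x) (b *s y) = a * b * cdot x y"
  by (simp add: cdot_def sum_distrib_left algebra_simps)

lemma cdot_vec_upd_left: "cdot (vec_upd x k \<zeta>) y = cdot (vec_upd x k 0) y + \<zeta> * y$k"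
proof -
  have "cdot (vec_upd x k \<zeta>) y = (\<Sum>i\<in>UNIV. vec_upd x k 0 $ i * y$i + (if i = k then \<zeta> * y$k else 0))"
    unfolding cdot_def by (rule sum.cong) auto
  then show ?thesis by (simp add: cdot_def sum.distrib)
qed

lemma cdot_vec_upd_right: "cdot x (vec_upd y k \<zeta>) = cdot x (vec_upd y k 0) + x$k * \<zeta>"
proof -
  have "cdot x (vec_upd y k \<zeta>) = (\<Sum>i\<in>UNIV. x$i * vec_upd y k 0 $ i + (if i = k then x$k * \<zeta> else 0))"
    unfolding cdot_def by (rule sum.cong) auto
  then show ?thesis by (simp add: cdot_def sum.distrib)
qed

lemma mem_hatZ_iff: "((p0, p), (q0, q)) \<in> hatZ \<longleftrightarrow> p0 * q0 = 1 + cdot p q"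
  by (auto simp: hatZ_def cdot_def algebra_simps)

definition chartP_inv :: "complex^'n \<Rightarrow> complex^'n \<Rightarrow> 'n::finite hpt" where
  "chartP_inv x y = ((1 + cdot x y, x), (1, y))"

definition chartQ_inv :: "complex^'n \<Rightarrow> complex^'n \<Rightarrow> 'n::finite hpt" where
  "chartQ_inv x y = ((1, x), (1 + cdot x y, y))"

lemma chartP_inv_in_hatZ: "chartP_inv x y \<in> hatZ"
  and chartQ_inv_in_hatZ: "chartQ_inv x y \<in> hatZ"
  by (simp_all add: chartP_inv_def chartQ_inv_def mem_hatZ_iff)

lemma chartP_chartP_inv [simp]: "chartP (chartP_inv x y) = (x, y)"
  and chartQ_chartQ_inv [simp]: "chartQ (chartQ_inv x y) = (x, y)"
  by (simp_all add: chartP_inv_def chartP_def chartQ_inv_def chartQ_def vec_eq_iff)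

lemma cstar_act_chartP:
  assumes "((p0, p), (q0, q)) \<in> hatZ" "q0 \<noteq> 0"
  shows "cstar_act q0 ((p0, p), (q0, q)) = case_prod chartP_inv (chartP ((p0, p), (q0, q)))"
proof -
  have "cdot (\<chi> i. p$i * q0) (\<chi> i. q$i / q0) = cdot p q"
    using assms(2) by (simp add: cdot_def)
  with assms show ?thesis
    by (simp add: mem_hatZ_iff chartP_def cstar_act_def chartP_inv_def vec_eq_iff mult.commute)
qed

lemma cstar_act_chartQ:
  assumes "((p0, p), (q0, q)) \<in> hatZ" "p0 \<noteq> 0"
  shows "cstar_act (1 / p0) ((p0, p), (q0, q)) = case_prod chartQ_inv (chartQ ((p0, p), (q0, q)))"
proof -
  have "cdot (\<chi> i. p$i / p0) (\<chi> i. p0 * q$i) = cdot p q"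
    using assms(2) by (simp add: cdot_def)
  with assms show ?thesis
    by (simp add: mem_hatZ_iff chartQ_def cstar_act_def chartQ_inv_def vec_eq_iff mult.commute)
qed

lemma compP_eq:
  assumes holo: "holo_hatD F"
  shows "compP F x y = F (chartP_inv x y)"
proof -
  define w where "w = (SOME w. w \<in> hatZ \<and> fst (snd w) \<noteq> 0 \<and> chartP w = (x, y))"
  have "w \<in> hatZ \<and> fst (snd w) \<noteq> 0 \<and> chartP w = (x, y)"
    unfolding w_def
    by (rule someI[of _ "chartP_inv x y"]) (simp add: chartP_inv_in_hatZ, simp add: chartP_inv_def)
  moreover obtain p0 p q0 q where w: "w = ((p0, p), (q0, q))" by (metis prod.collapse)
  ultimately have "w \<in> hatZ" "q0 \<noteq> 0" "cstar_act q0 w = chartP_inv x y"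
    using cstar_act_chartP[of p0 p q0 q] by (auto simp del: chartP_def cstar_act_def)
  then have "F (chartP_inv x y) = F w"
    using holo_hatD_cstar_invariant[OF holo, of w "q0"] by simp
  then show ?thesis
    unfolding compP_def w_def[symmetric] by simp
qed

lemma compQ_eq:
  assumes holo: "holo_hatD F"
  shows "compQ F x y = F (chartQ_inv x y)"
proof -
  define w where "w = (SOME w. w \<in> hatZ \<and> fst (fst w) \<noteq> 0 \<and> chartQ w = (x, y))"
  have "w \<in> hatZ \<and> fst (fst w) \<noteq> 0 \<and> chartQ w = (x, y)"
    unfolding w_def
    by (rule someI[of _ "chartQ_inv x y"]) (simp add: chartQ_inv_in_hatZ, simp add: chartQ_inv_def)
  moreover obtain p0 p q0 q where w: "w = ((p0, p), (q0, q))" by (metis prod.collapse)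
  ultimately have "w \<in> hatZ" "1 / p0 \<noteq> 0" "cstar_act (1 / p0) w = chartQ_inv x y"
    using cstar_act_chartQ[of p0 p q0 q] by (auto simp del: chartQ_def cstar_act_def)
  then have "F (chartQ_inv x y) = F w"
    using holo_hatD_cstar_invariant[OF holo, of w "1 / p0"] by simp
  then show ?thesis
    unfolding compQ_def w_def[symmetric] by simp
qed

lemma chartP_inv_vec_upd_left:
    "chartP_inv (vec_upd x k \<zeta>) y = chartP_inv (vec_upd x k 0) y + hscale \<zeta> ((y$k, vec_upd 0 k 1), (0, 0))"
  and chartP_inv_vec_upd_right:
    "chartP_inv x (vec_upd y k \<zeta>) = chartP_inv x (vec_upd y k 0) + hscale \<zeta> ((x$k, 0), (0, vec_upd 0 k 1))"
  and chartQ_inv_vec_upd_left: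
    "chartQ_inv (vec_upd x k \<zeta>) y = chartQ_inv (vec_upd x k 0) y + hscale \<zeta> ((0, vec_upd 0 k 1), (y$k, 0))"
  and chartQ_inv_vec_upd_right:
    "chartQ_inv x (vec_upd y k \<zeta>) = chartQ_inv x (vec_upd y k 0) + hscale \<zeta> ((0, 0), (x$k, vec_upd 0 k 1))"
  unfolding chartP_inv_def chartQ_inv_def cdot_vec_upd_left[of x k \<zeta>] cdot_vec_upd_right[of x y k \<zeta>]
  by (simp_all add: vec_eq_iff mult.commute)

lemma continuous_on_chartP_inv [continuous_intros]:
  "continuous_on S f \<Longrightarrow> continuous_on S g \<Longrightarrow> continuous_on S (\<lambda>t. chartP_inv (f t) (g t))"
  unfolding chartP_inv_def cdot_def by (intro continuous_intros)

lemma continuous_on_chartQ_inv [continuous_intros]: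
  "continuous_on S f \<Longrightarrow> continuous_on S g \<Longrightarrow> continuous_on S (\<lambda>t. chartQ_inv (f t) (g t))"
  unfolding chartQ_inv_def cdot_def by (intro continuous_intros)

lemma holo_hatD_chartP_inv_eq_chartQ_inv:
  fixes F :: "'n::finite hpt \<Rightarrow> complex"
  assumes holo: "holo_hatD F" and s: "s = 1 + cdot x y" "s \<noteq> 0" and t: "t * t' = 1"
  shows "F (chartP_inv (t *s x) (t' *s y)) = F (chartQ_inv (t *s ((1 / s) *s x)) (t' *s (s *s y)))"
proof -
  have "cstar_act s (chartQ_inv ((t / s) *s x) ((t' * s) *s y)) = chartP_inv (t *s x) (t' *s y)"
    using s t by (simp add: chartQ_inv_def chartP_inv_def cstar_act_def vec_eq_iff)
  moreover have "(t / s) *s x = t *s ((1 / s) *s x)" "(t' * s) *s y = t' *s (s *s y)"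
    by (simp_all add: vector_smult_assoc)
  ultimately show ?thesis
    using holo_hatD_cstar_invariant[OF holo chartQ_inv_in_hatZ s(2)] by metis
qed

section \<open>Taylor coefficients in the charts\<close>

definition vec_left :: "'a^('n + 'n) \<Rightarrow> 'a^'n" where
  "vec_left z = (\<chi> i. z$Inl i)"

definition vec_right :: "'a^('n + 'n) \<Rightarrow> 'a^'n" where
  "vec_right z = (\<chi> i. z$Inr i)"

definition vec_join :: "'a^'n \<Rightarrow> 'a^'n \<Rightarrow> 'a^('n + 'n)" where
  "vec_join x y = (\<chi> k. case k of Inl i \<Rightarrow> x$i | Inr i \<Rightarrow> y$i)"

lemma vec_left_join [simp]: "vec_left (vec_join x y) = x"
  and vec_right_join [simp]: "vec_right (vec_join x y) = y"
  by (simp_all add: vec_left_def vec_right_def vec_join_def vec_eq_iff)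

lemma vec_left_upd_Inl [simp]: "vec_left (vec_upd w (Inl k) \<zeta>) = vec_upd (vec_left w) k \<zeta>"
  and vec_right_upd_Inl [simp]: "vec_right (vec_upd w (Inl k) \<zeta>) = vec_right w"
  and vec_left_upd_Inr [simp]: "vec_left (vec_upd w (Inr k) \<zeta>) = vec_left w"
  and vec_right_upd_Inr [simp]: "vec_right (vec_upd w (Inr k) \<zeta>) = vec_upd (vec_right w) k \<zeta>"
  by (simp_all add: vec_left_def vec_right_def vec_eq_iff)

lemma continuous_on_vec_left [continuous_intros]:
  "continuous_on S f \<Longrightarrow> continuous_on S (\<lambda>x. vec_left (f x))"
  unfolding vec_left_def by (intro continuous_intros)

lemma continuous_on_vec_right [continuous_intros]:
  "continuous_on S f \<Longrightarrow> continuous_on S (\<lambda>x. vec_right (f x))"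
  unfolding vec_right_def by (intro continuous_intros)

lemma mono_case_sum: "mono z (case_sum P Q) = mono (vec_left z) P * mono (vec_right z) Q"
proof -
  have "mono z (case_sum P Q) = (\<Prod>k\<in>UNIV <+> UNIV. z$k ^ case_sum P Q k)"
    by (simp add: mono_def)
  also have "\<dots> = mono (vec_left z) P * mono (vec_right z) Q"
    by (subst prod.Plus) (auto simp: mono_def vec_left_def vec_right_def)
  finally show ?thesis .
qed

lemma has_sum_case_sum_multiindex:
  fixes f :: "('n + 'm \<Rightarrow> 'a) \<Rightarrow> 'b::{comm_monoid_add,topological_space}"
  shows "((\<lambda>(P, Q). f (case_sum P Q)) has_sum l) UNIV \<longleftrightarrow> (f has_sum l) UNIV"
proof -
  have "bij_betw (\<lambda>(P, Q). case_sum P Q) UNIV (UNIV :: ('n + 'm \<Rightarrow> 'a) set)"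
    by (rule bij_betwI[where g = "\<lambda>\<alpha>. (\<alpha> \<circ> Inl, \<alpha> \<circ> Inr)"])
       (auto simp: fun_eq_iff split: sum.splits)
  from has_sum_reindex_bij_betw[OF this, of f l] show ?thesis
    by (simp add: case_prod_unfold)
qed

lemma power_series_coeffs_unique_Pair:
  fixes c c' :: "('n::finite \<Rightarrow> nat) \<Rightarrow> ('n \<Rightarrow> nat) \<Rightarrow> complex"
  assumes e: "e > 0" and e': "e' > 0"
    and h: "\<And>x y. norm (x, y) < e \<Longrightarrow> ((\<lambda>(P, Q). c P Q * mono x P * mono y Q) has_sum g x y) UNIV"
    and h': "\<And>x y. norm (x, y) < e' \<Longrightarrow> ((\<lambda>(P, Q). c' P Q * mono x P * mono y Q) has_sum g x y) UNIV"
  shows "c = c'"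
proof -
  define r where "r = min e e' / (2 * real CARD('n) + 1)"
  have r: "r > 0" using e e' by (simp add: r_def)
  have "2 * real CARD('n) * r = min e e' - r"
    by (simp add: r_def field_simps)
  have small: "norm (vec_left z, vec_right z) < min e e'" if z: "\<And>i. norm (z$i) < r"
    for z :: "complex^('n + 'n)"
  proof -
    have "norm (vec_left z) \<le> real CARD('n) * r" "norm (vec_right z) \<le> real CARD('n) * r"
      using norm_vec_le_card[of "vec_left z" r] norm_vec_le_card[of "vec_right z" r] z
      by (auto simp: vec_left_def vec_right_def less_imp_le)
    with \<open>2 * real CARD('n) * r = min e e' - r\<close> r show ?thesis
      using norm_Pair_le[of "vec_left z" "vec_right z"] by linarith
  qed
  have unsplit: "((\<lambda>\<alpha>. d (\<alpha> \<circ> Inl) (\<alpha> \<circ> Inr) * mono z \<alpha>) has_sum g (vec_left z) (vec_right z)) UNIV"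
    if "((\<lambda>(P, Q). d P Q * mono (vec_left z) P * mono (vec_right z) Q) has_sum g (vec_left z) (vec_right z)) UNIV"
    for d z
    using that has_sum_case_sum_multiindex[of "\<lambda>\<alpha>. d (\<alpha> \<circ> Inl) (\<alpha> \<circ> Inr) * mono z \<alpha>"]
    by (simp add: mono_case_sum case_sum_o_inj mult.assoc)
  have "(\<lambda>\<alpha>. c (\<alpha> \<circ> Inl) (\<alpha> \<circ> Inr)) = (\<lambda>\<alpha>. c' (\<alpha> \<circ> Inl) (\<alpha> \<circ> Inr))"
  proof (rule power_series_coeffs_unique[OF r r, where f = "\<lambda>z. g (vec_left z) (vec_right z)"])
    fix z :: "complex^('n + 'n)" assume "\<And>i. norm (z$i) < r"
    from small[OF this] show "((\<lambda>\<alpha>. c (\<alpha> \<circ> Inl) (\<alpha> \<circ> Inr) * mono z \<alpha>) has_sum g (vec_left z) (vec_right z)) UNIV"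
      and "((\<lambda>\<alpha>. c' (\<alpha> \<circ> Inl) (\<alpha> \<circ> Inr) * mono z \<alpha>) has_sum g (vec_left z) (vec_right z)) UNIV"
      by (auto intro!: unsplit h h')
  qed
  then show "c = c'"
    unfolding fun_eq_iff by (metis case_sum_o_inj(1,2))
qed

lemma has_sum_taylor_coeff:
  fixes g :: "complex^'n::finite \<Rightarrow> complex^'n \<Rightarrow> complex"
  assumes cont: "continuous_on UNIV (\<lambda>z. g (vec_left z) (vec_right z))"
    and hol: "separately_holomorphic (\<lambda>z. g (vec_left z) (vec_right z))"
  shows "((\<lambda>(P, Q). taylor_coeff g P Q * mono x P * mono y Q) has_sum g x y) UNIV"
proof -
  define c where "c P Q = cauchy_coeff (\<lambda>z. g (vec_left z) (vec_right z)) (case_sum P Q)" for P Q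
  have expansion: "((\<lambda>(P, Q). c P Q * mono x P * mono y Q) has_sum g x y) UNIV" for x y
    using has_sum_cauchy_coeff[OF cont hol, of "vec_join x y"]
      has_sum_case_sum_multiindex[of "\<lambda>\<alpha>. cauchy_coeff _ \<alpha> * mono (vec_join x y) \<alpha>"]
    by (simp add: c_def mono_case_sum mult.assoc)
  have "taylor_coeff g = c"
    unfolding taylor_coeff_def
  proof (rule the_equality)
    show "\<exists>e>0. \<forall>x y. norm (x, y) < e \<longrightarrow> ((\<lambda>(P, Q). c P Q * mono x P * mono y Q) has_sum g x y) UNIV"
      using expansion by (intro exI[of _ 1]) auto
  next
    fix c' assume "\<exists>e>0. \<forall>x y. norm (x, y) < e \<longrightarrow>
        ((\<lambda>(P, Q). c' P Q * mono x P * mono y Q) has_sum g x y) UNIV"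
    then show "c' = c"
      using power_series_coeffs_unique_Pair[OF _ zero_less_one _ expansion] by blast
  qed
  with expansion show ?thesis by simp
qed

lemma has_sum_taylor_coeff_chart:
  fixes F :: "'n::finite hpt \<Rightarrow> complex" and \<Phi> :: "complex^'n \<Rightarrow> complex^'n \<Rightarrow> 'n hpt"
  assumes holo: "holo_hatD F" and g: "\<And>x y. g x y = F (\<Phi> x y)" and Z: "\<And>x y. \<Phi> x y \<in> hatZ"
    and cont: "continuous_on UNIV (\<lambda>z. \<Phi> (vec_left z) (vec_right z))"
    and left: "\<And>x y k. \<exists>A B. \<forall>\<zeta>. \<Phi> (vec_upd x k \<zeta>) y = A + hscale \<zeta> B"
    and right: "\<And>x y k. \<exists>A B. \<forall>\<zeta>. \<Phi> x (vec_upd y k \<zeta>) = A + hscale \<zeta> B"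
  shows "((\<lambda>(P, Q). taylor_coeff g P Q * mono x P * mono y Q) has_sum F (\<Phi> x y)) UNIV"
proof -
  have "continuous_on UNIV (\<lambda>z. g (vec_left z) (vec_right z))"
    unfolding g using continuous_on_compose2[OF continuous_on_hatZ_holo_hatD[OF holo] cont] Z by blast
  moreover have "(\<lambda>\<zeta>. g (vec_left (vec_upd w j \<zeta>)) (vec_right (vec_upd w j \<zeta>))) holomorphic_on UNIV" for w j
  proof (cases j)
    case (Inl k)
    obtain A B where AB: "\<And>\<zeta>. \<Phi> (vec_upd (vec_left w) k \<zeta>) (vec_right w) = A + hscale \<zeta> B"
      using left by blast
    then have "A + hscale \<zeta> B \<in> hatZ" for \<zeta> using Z by metis
    with AB Inl show ?thesis
      using holomorphic_on_affine_line[OF holo, of A B] by (simp add: g)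
  next
    case (Inr k)
    obtain A B where AB: "\<And>\<zeta>. \<Phi> (vec_left w) (vec_upd (vec_right w) k \<zeta>) = A + hscale \<zeta> B"
      using right by blast
    then have "A + hscale \<zeta> B \<in> hatZ" for \<zeta> using Z by metis
    with AB Inr show ?thesis
      using holomorphic_on_affine_line[OF holo, of A B] by (simp add: g)
  qed
  ultimately show ?thesis
    using has_sum_taylor_coeff[of g] by (simp add: separately_holomorphic_def g)
qed

lemma has_sum_taylor_coeff_compP:
  assumes holo: "holo_hatD F"
  shows "((\<lambda>(P, Q). taylor_coeff (compP F) P Q * mono x P * mono y Q) has_sum F (chartP_inv x y)) UNIV"
proof (rule has_sum_taylor_coeff_chart[OF holo compP_eq[OF holo] chartP_inv_in_hatZ])
  show "continuous_on UNIV (\<lambda>z. chartP_inv (vec_left z) (vec_right z))"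
    by (intro continuous_intros)
  show "\<exists>A B. \<forall>\<zeta>. chartP_inv (vec_upd x k \<zeta>) y = A + hscale \<zeta> B" for x y k
    using chartP_inv_vec_upd_left by blast
  show "\<exists>A B. \<forall>\<zeta>. chartP_inv x (vec_upd y k \<zeta>) = A + hscale \<zeta> B" for x y k
    using chartP_inv_vec_upd_right by blast
qed

lemma has_sum_taylor_coeff_compQ:
  assumes holo: "holo_hatD F"
  shows "((\<lambda>(P, Q). taylor_coeff (compQ F) P Q * mono x P * mono y Q) has_sum F (chartQ_inv x y)) UNIV"
proof (rule has_sum_taylor_coeff_chart[OF holo compQ_eq[OF holo] chartQ_inv_in_hatZ])
  show "continuous_on UNIV (\<lambda>z. chartQ_inv (vec_left z) (vec_right z))"
    by (intro continuous_intros)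
  show "\<exists>A B. \<forall>\<zeta>. chartQ_inv (vec_upd x k \<zeta>) y = A + hscale \<zeta> B" for x y k
    using chartQ_inv_vec_upd_left by blast
  show "\<exists>A B. \<forall>\<zeta>. chartQ_inv x (vec_upd y k \<zeta>) = A + hscale \<zeta> B" for x y k
    using chartQ_inv_vec_upd_right by blast
qed

section \<open>Vanishing of \<open>F\<close>\<close>

lemma has_sum_on_circle_orbit:
  assumes "((\<lambda>(P, Q). c P Q * mono (circ \<tau> *s x) P * mono (cnj (circ \<tau>) *s y) Q) has_sum S) UNIV"
  shows "((\<lambda>p. (c (fst p) (snd p) * mono x (fst p) * mono y (snd p))
            * fourier_char (int (msize (fst p)) - int (msize (snd p))) \<tau>) has_sum S) UNIV"
  using assms
  by (simp add: case_prod_unfold mono_vector_smult circ_pow_mult_cnj_pow[symmetric] ac_simps)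

lemma taylor_coeff_compP_eq_0:
  "\<forall>P Q. fprime F P Q = 0 \<Longrightarrow> msize Q \<le> msize P \<Longrightarrow> taylor_coeff (compP F) P Q = 0"
  and taylor_coeff_compQ_eq_0:
  "\<forall>P Q. fprime F P Q = 0 \<Longrightarrow> msize P < msize Q \<Longrightarrow> taylor_coeff (compQ F) P Q = 0"
  by (metis fprime_def not_le)+

lemma chartP_inv_eq_0:
  fixes F :: "'n::finite hpt \<Rightarrow> complex"
  assumes holo: "holo_hatD F" and hyp: "\<forall>P Q. fprime F P Q = 0" and s0: "1 + cdot x y \<noteq> 0"
  shows "F (chartP_inv x y) = 0"
proof -
  define s where "s = 1 + cdot x y"
  define \<psi> where "\<psi> \<tau> = F (chartP_inv (circ \<tau> *s x) (cnj (circ \<tau>) *s y))" for \<tau>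
  define c where "c = taylor_coeff (compP F)"
  define c' where "c' = taylor_coeff (compQ F)"
  define a where "a p = c (fst p) (snd p) * mono x (fst p) * mono y (snd p)" for p
  define b where "b p = c' (fst p) (snd p) * mono ((1 / s) *s x) (fst p) * mono (s *s y) (snd p)" for p
  define k :: "('n \<Rightarrow> nat) \<times> ('n \<Rightarrow> nat) \<Rightarrow> int" where
    "k p = int (msize (fst p)) - int (msize (snd p))" for p
  have sum_a: "((\<lambda>p. a p * fourier_char (k p) \<tau>) has_sum \<psi> \<tau>) UNIV" for \<tau>
    unfolding a_def k_def \<psi>_def c_def
    by (rule has_sum_on_circle_orbit, rule has_sum_taylor_coeff_compP[OF holo])
  have \<psi>_chartQ: "\<psi> \<tau> = F (chartQ_inv (circ \<tau> *s ((1 / s) *s x)) (cnj (circ \<tau>) *s (s *s y)))" for \<tau>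
    unfolding \<psi>_def using s0 by (intro holo_hatD_chartP_inv_eq_chartQ_inv[OF holo s_def]) (simp_all add: s_def)
  have sum_b: "((\<lambda>p. b p * fourier_char (k p) \<tau>) has_sum \<psi> \<tau>) UNIV" for \<tau>
    unfolding b_def k_def c'_def \<psi>_chartQ
    by (rule has_sum_on_circle_orbit, rule has_sum_taylor_coeff_compQ[OF holo])
  have "(\<lambda>p. norm (a p)) summable_on UNIV" "(\<lambda>p. norm (b p)) summable_on UNIV"
    using sum_a[of 0] sum_b[of 0] summable_on_iff_abs_summable_on_complex
    by (auto simp: fourier_char_def summable_on_def)
  moreover have "k p < 0" if "a p \<noteq> 0" for p
    using that taylor_coeff_compP_eq_0[OF hyp, of "snd p" "fst p"] by (force simp: a_def c_def k_def)
  moreover have "k q \<ge> 0" if "b q \<noteq> 0" for q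
    using that taylor_coeff_compQ_eq_0[OF hyp, of "fst q" "snd q"] by (force simp: b_def c'_def k_def)
  moreover have "continuous_on {0..1} \<psi>"
    unfolding \<psi>_def using continuous_on_hatZ_holo_hatD[OF holo] chartP_inv_in_hatZ
    by (auto intro!: continuous_on_compose2[of hatZ F] continuous_intros)
  ultimately have "\<psi> 0 = 0"
    using sum_a sum_b by (intro fourier_disjoint_spectra_eq_0[where a = a and b = b and k = k and l = k]) force+
  then show ?thesis by (simp add: \<psi>_def)
qed

lemma holo_hatD_eq_0:
  fixes F :: "'n::finite hpt \<Rightarrow> complex"
  assumes holo: "holo_hatD F" and hyp: "\<forall>P Q. fprime F P Q = 0"
    and w: "w \<in> hatZ" "fst (fst w) * fst (snd w) \<noteq> 0"
  shows "F w = 0"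
proof -
  obtain p0 p q0 q where W: "w = ((p0, p), (q0, q))" by (metis prod.collapse)
  define x y where "x = (\<chi> i. p$i * q0)" and "y = (\<chi> i. q$i / q0)"
  have q0: "q0 \<noteq> 0" and pq: "p0 * q0 \<noteq> 0" using w(2) by (auto simp: W)
  have "F w = F (chartP_inv x y)"
    using holo_hatD_cstar_invariant[OF holo w(1) q0] cstar_act_chartP[OF w(1)[unfolded W] q0]
    by (simp add: W x_def y_def chartP_def)
  also have "\<dots> = 0"
  proof (rule chartP_inv_eq_0[OF holo hyp])
    have "cdot x y = cdot p q" using q0 by (simp add: x_def y_def cdot_def)
    then show "1 + cdot x y \<noteq> 0" using w(1) pq by (simp add: W mem_hatZ_iff)
  qed
  finally show ?thesis .
qed

lemma Zset_fst_neq_0: "r \<in> Zset \<Longrightarrow> fst r \<noteq> 0"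
  using sum_nonneg[of UNIV "\<lambda>i. (cmod (snd r $ i))\<^sup>2"] by (auto simp: Zset_def)

lemma DeltaD_mem_hatZ:
  assumes "r \<in> Zset"
  shows "DeltaD r \<in> hatZ"
proof -
  obtain r0 rr where r: "r = (r0, rr)" by (cases r)
  have "(cmod r0)\<^sup>2 = 1 + (\<Sum>i\<in>UNIV. (cmod (rr$i))\<^sup>2)"
    using assms by (simp add: r Zset_def)
  then have "r0 * cnj r0 = of_real (1 + (\<Sum>i\<in>UNIV. (cmod (rr$i))\<^sup>2))"
    by (simp only: complex_norm_square[symmetric])
  also have "\<dots> = 1 + (\<Sum>i\<in>UNIV. rr$i * cnj (rr$i))"
    by (simp only: of_real_add of_real_1 of_real_sum complex_norm_square)
  finally show ?thesis
    by (simp add: r DeltaD_def mem_hatZ_iff cdot_def)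
qed

theorem lemma3p15:
  fixes F :: "'n::finite hpt \<Rightarrow> complex" and a :: "'n cpt \<Rightarrow> complex"
  assumes "holo_hatD F"
    and "\<forall>r\<in>Zset. a r = F (DeltaD r)"
    and "\<forall>P Q. fprime F P Q = 0"
  shows "\<forall>r\<in>Zset. a r = 0"
proof
  fix r :: "'n cpt" assume r: "r \<in> Zset"
  have "fst (fst (DeltaD r)) * fst (snd (DeltaD r)) \<noteq> 0"
    using Zset_fst_neq_0[OF r] by (cases r) (simp add: DeltaD_def)
  then show "a r = 0"
    using holo_hatD_eq_0[OF assms(1,3) DeltaD_mem_hatZ[OF r]] assms(2) r by simp
qed

end
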